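(* Let $F : \mathsf{Set} \to \mathsf{Set}$ be a finitary functor which preserves pullbacks of monomorphisms. Let $\rho$ be an uncountable regular ordinal. Then $F$ preserves $\rho^{\mathrm{op}}$-indexed limits: for every functor $X : \rho^{\mathrm{op}} \to \mathsf{Set}$ (i.e. a family of sets $(X_\alpha)_{\alpha<\rho}$ with restriction maps $X_\alpha \to X_\beta$ for $\beta \le \alpha$, compatible with composition), the canonical comparison map $F(\lim_{\alpha<\rho} X_\alpha) \to \lim_{\alpha<\rho} F(X_\alpha)$ is a bijection.
   Context: A functor $F:\mathsf{Set}\to\mathsf{Set}$ is finitary if it preserves directed colimits. $F$ preserves pullbacks of monomorphisms if for every pullback square $A \to B$, $A \to C$, $B \rightarrowtail D$, $C \to D$ in $\mathsf{Set}$ in which $B \to D$ is a monomorphism, the image of the square under $F$ is again a pullback square. An ordinal $\rho$ is regular if it is a limit ordinal equal to its own cofinality (every subset of $\rho$ of cardinality smaller than $\rho$ is bounded in $\rho$); here $\rho$ is moreover assumed uncountable. The ordinal $\rho$ is viewed as a poset category, and $\rho^{\mathrm{op}}$ is its opposite. *)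

theory Defs
  imports Main "HOL-Library.FuncSet" "HOL-Library.Countable_Set"
begin

text \<open>A functor F from sets to sets: objects are subsets of the universe type 'a,
  morphisms A -> B are functions f with f in A -> B (only the values on A matter).\<close>

definition set_functor ::
  "('a set \<Rightarrow> 'b set) \<Rightarrow> ('a set \<Rightarrow> 'a set \<Rightarrow> ('a \<Rightarrow> 'a) \<Rightarrow> 'b \<Rightarrow> 'b) \<Rightarrow> bool" where
  "set_functor Fo Fm \<longleftrightarrow>
     (\<forall>A B f. f \<in> A \<rightarrow> B \<longrightarrow> Fm A B f \<in> Fo A \<rightarrow> Fo B) \<and>
     (\<forall>A B f g. f \<in> A \<rightarrow> B \<and> (\<forall>x\<in>A. f x = g x) \<longrightarrow> (\<forall>y\<in>Fo A. Fm A B f y = Fm A B g y)) \<and>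
     (\<forall>A. \<forall>y\<in>Fo A. Fm A A id y = y) \<and>
     (\<forall>A B C f g. f \<in> A \<rightarrow> B \<and> g \<in> B \<rightarrow> C \<longrightarrow>
        (\<forall>y\<in>Fo A. Fm A C (g \<circ> f) y = Fm B C g (Fm A B f y)))"

definition is_pullback ::
  "'a set \<Rightarrow> 'a set \<Rightarrow> 'a set \<Rightarrow> 'a set \<Rightarrow> ('a \<Rightarrow> 'a) \<Rightarrow> ('a \<Rightarrow> 'a) \<Rightarrow> ('a \<Rightarrow> 'a) \<Rightarrow> ('a \<Rightarrow> 'a) \<Rightarrow> bool" where
  "is_pullback A B C D p q m n \<longleftrightarrow>
     p \<in> A \<rightarrow> B \<and> q \<in> A \<rightarrow> C \<and> m \<in> B \<rightarrow> D \<and> n \<in> C \<rightarrow> D \<and>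
     (\<forall>a\<in>A. m (p a) = n (q a)) \<and>
     (\<forall>b\<in>B. \<forall>c\<in>C. m b = n c \<longrightarrow> (\<exists>!a. a \<in> A \<and> p a = b \<and> q a = c))"

definition preserves_mono_pullbacks ::
  "('a set \<Rightarrow> 'b set) \<Rightarrow> ('a set \<Rightarrow> 'a set \<Rightarrow> ('a \<Rightarrow> 'a) \<Rightarrow> 'b \<Rightarrow> 'b) \<Rightarrow> bool" where
  "preserves_mono_pullbacks Fo Fm \<longleftrightarrow>
     (\<forall>A B C D p q m n. is_pullback A B C D p q m n \<and> inj_on m B \<longrightarrow>
        is_pullback (Fo A) (Fo B) (Fo C) (Fo D) (Fm A B p) (Fm A C q) (Fm B D m) (Fm C D n))"

definition directed_poset :: "'i set \<Rightarrow> ('i \<Rightarrow> 'i \<Rightarrow> bool) \<Rightarrow> bool" where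
  "directed_poset I le \<longleftrightarrow>
     I \<noteq> {} \<and>
     (\<forall>i\<in>I. le i i) \<and>
     (\<forall>i\<in>I. \<forall>j\<in>I. le i j \<and> le j i \<longrightarrow> i = j) \<and>
     (\<forall>i\<in>I. \<forall>j\<in>I. \<forall>k\<in>I. le i j \<and> le j k \<longrightarrow> le i k) \<and>
     (\<forall>i\<in>I. \<forall>j\<in>I. \<exists>k\<in>I. le i k \<and> le j k)"

definition diagram ::
  "'i set \<Rightarrow> ('i \<Rightarrow> 'i \<Rightarrow> bool) \<Rightarrow> ('i \<Rightarrow> 'c set) \<Rightarrow> ('i \<Rightarrow> 'i \<Rightarrow> 'c \<Rightarrow> 'c) \<Rightarrow> bool" where
  "diagram I le D Dm \<longleftrightarrow>
     (\<forall>i\<in>I. \<forall>j\<in>I. le i j \<longrightarrow> Dm i j \<in> D i \<rightarrow> D j) \<and>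
     (\<forall>i\<in>I. \<forall>x\<in>D i. Dm i i x = x) \<and>
     (\<forall>i\<in>I. \<forall>j\<in>I. \<forall>k\<in>I. le i j \<and> le j k \<longrightarrow> (\<forall>x\<in>D i. Dm j k (Dm i j x) = Dm i k x))"

definition cocone ::
  "'i set \<Rightarrow> ('i \<Rightarrow> 'i \<Rightarrow> bool) \<Rightarrow> ('i \<Rightarrow> 'c set) \<Rightarrow> ('i \<Rightarrow> 'i \<Rightarrow> 'c \<Rightarrow> 'c)
     \<Rightarrow> 'c set \<Rightarrow> ('i \<Rightarrow> 'c \<Rightarrow> 'c) \<Rightarrow> bool" where
  "cocone I le D Dm C \<iota> \<longleftrightarrow>
     (\<forall>i\<in>I. \<iota> i \<in> D i \<rightarrow> C) \<and>
     (\<forall>i\<in>I. \<forall>j\<in>I. le i j \<longrightarrow> (\<forall>x\<in>D i. \<iota> j (Dm i j x) = \<iota> i x))"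

definition is_colimit ::
  "'i set \<Rightarrow> ('i \<Rightarrow> 'i \<Rightarrow> bool) \<Rightarrow> ('i \<Rightarrow> 'c set) \<Rightarrow> ('i \<Rightarrow> 'i \<Rightarrow> 'c \<Rightarrow> 'c)
     \<Rightarrow> 'c set \<Rightarrow> ('i \<Rightarrow> 'c \<Rightarrow> 'c) \<Rightarrow> bool" where
  "is_colimit I le D Dm C \<iota> \<longleftrightarrow>
     cocone I le D Dm C \<iota> \<and>
     (\<forall>T \<tau>. cocone I le D Dm T \<tau> \<longrightarrow>
        (\<exists>u. u \<in> C \<rightarrow> T \<and> (\<forall>i\<in>I. \<forall>x\<in>D i. u (\<iota> i x) = \<tau> i x) \<and>
             (\<forall>v. v \<in> C \<rightarrow> T \<and> (\<forall>i\<in>I. \<forall>x\<in>D i. v (\<iota> i x) = \<tau> i x) \<longrightarrow>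
                  (\<forall>c\<in>C. v c = u c))))"

text \<open>F is finitary: it preserves (all) directed colimits. Index posets are taken with
  carrier a set of subsets of the universe (this includes the directed poset of finite
  subsets of any object).\<close>

definition finitary ::
  "('a set \<Rightarrow> 'b set) \<Rightarrow> ('a set \<Rightarrow> 'a set \<Rightarrow> ('a \<Rightarrow> 'a) \<Rightarrow> 'b \<Rightarrow> 'b) \<Rightarrow> bool" where
  "finitary Fo Fm \<longleftrightarrow>
     (\<forall>(I :: 'a set set) le (D :: 'a set \<Rightarrow> 'a set) Dm C \<iota>.
        directed_poset I le \<and> diagram I le D Dm \<and> is_colimit I le D Dm C \<iota> \<longrightarrow>
        is_colimit I le (\<lambda>i. Fo (D i)) (\<lambda>i j. Fm (D i) (D j) (Dm i j))
                   (Fo C) (\<lambda>i. Fm (D i) C (\<iota> i)))"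

text \<open>The ordinal rho is given as a well-order r (its carrier is Field r, the
  order is (a,b) in r meaning a \<le> b).\<close>

definition uncountable_regular_ordinal :: "'k rel \<Rightarrow> bool" where
  "uncountable_regular_ordinal r \<longleftrightarrow>
     Well_order r \<and>
     \<not> countable (Field r) \<and>
     (\<forall>a\<in>Field r. \<exists>b\<in>Field r. (a, b) \<in> r \<and> a \<noteq> b) \<and>
     (\<forall>K. K \<subseteq> Field r \<and> (card_of K, r) \<in> ordLess \<longrightarrow> (\<exists>b\<in>Field r. \<forall>k\<in>K. (k, b) \<in> r))"

definition op_diagram :: "'k rel \<Rightarrow> ('k \<Rightarrow> 'c set) \<Rightarrow> ('k \<Rightarrow> 'k \<Rightarrow> 'c \<Rightarrow> 'c) \<Rightarrow> bool" where
  "op_diagram r X R \<longleftrightarrow>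
     (\<forall>\<alpha> \<beta>. (\<beta>, \<alpha>) \<in> r \<longrightarrow> R \<alpha> \<beta> \<in> X \<alpha> \<rightarrow> X \<beta>) \<and>
     (\<forall>\<alpha>\<in>Field r. \<forall>x\<in>X \<alpha>. R \<alpha> \<alpha> x = x) \<and>
     (\<forall>\<alpha> \<beta> \<gamma>. (\<beta>, \<alpha>) \<in> r \<and> (\<gamma>, \<beta>) \<in> r \<longrightarrow> (\<forall>x\<in>X \<alpha>. R \<beta> \<gamma> (R \<alpha> \<beta> x) = R \<alpha> \<gamma> x))"

definition op_cone :: "'k rel \<Rightarrow> ('k \<Rightarrow> 'c set) \<Rightarrow> ('k \<Rightarrow> 'k \<Rightarrow> 'c \<Rightarrow> 'c)
     \<Rightarrow> 'c set \<Rightarrow> ('k \<Rightarrow> 'c \<Rightarrow> 'c) \<Rightarrow> bool" where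
  "op_cone r X R L \<pi> \<longleftrightarrow>
     (\<forall>\<alpha>\<in>Field r. \<pi> \<alpha> \<in> L \<rightarrow> X \<alpha>) \<and>
     (\<forall>\<alpha> \<beta>. (\<beta>, \<alpha>) \<in> r \<longrightarrow> (\<forall>x\<in>L. R \<alpha> \<beta> (\<pi> \<alpha> x) = \<pi> \<beta> x))"

definition is_op_limit :: "'k rel \<Rightarrow> ('k \<Rightarrow> 'c set) \<Rightarrow> ('k \<Rightarrow> 'k \<Rightarrow> 'c \<Rightarrow> 'c)
     \<Rightarrow> 'c set \<Rightarrow> ('k \<Rightarrow> 'c \<Rightarrow> 'c) \<Rightarrow> bool" where
  "is_op_limit r X R L \<pi> \<longleftrightarrow>
     op_cone r X R L \<pi> \<and>
     (\<forall>T \<tau>. op_cone r X R T \<tau> \<longrightarrow>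
        (\<exists>u. u \<in> T \<rightarrow> L \<and> (\<forall>\<alpha>\<in>Field r. \<forall>t\<in>T. \<pi> \<alpha> (u t) = \<tau> \<alpha> t) \<and>
             (\<forall>v. v \<in> T \<rightarrow> L \<and> (\<forall>\<alpha>\<in>Field r. \<forall>t\<in>T. \<pi> \<alpha> (v t) = \<tau> \<alpha> t) \<longrightarrow>
                  (\<forall>t\<in>T. v t = u t))))"

definition op_threads :: "'k rel \<Rightarrow> ('k \<Rightarrow> 'c set) \<Rightarrow> ('k \<Rightarrow> 'k \<Rightarrow> 'c \<Rightarrow> 'c) \<Rightarrow> ('k \<Rightarrow> 'c) set" where
  "op_threads r X R =
     {t. t \<in> extensional (Field r) \<and> (\<forall>\<alpha>\<in>Field r. t \<alpha> \<in> X \<alpha>) \<and>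
         (\<forall>\<alpha> \<beta>. (\<beta>, \<alpha>) \<in> r \<longrightarrow> R \<alpha> \<beta> (t \<alpha>) = t \<beta>)}"

end

theory Submission
  imports Defs "HOL-Library.Countable_Set_Type"
begin

text \<open>Finitarity makes every \<open>t \<in> F X\<close> lie in the image of \<open>F (A \<hookrightarrow> X)\<close> for some finite
  \<open>A \<subseteq> X\<close> (a support of \<open>t\<close>). Preservation of pullbacks of monomorphisms makes \<open>F\<close> preserve
  injections and makes supports closed under intersection, so every \<open>t\<close> has a least support,
  and it is finite.

  Injectivity of the comparison map: two elements of \<open>F L\<close> have a common finite support \<open>N\<close>,
  and some projection \<open>\<pi>\<^sub>\<alpha>\<close> is injective on \<open>N\<close>, hence \<open>F \<pi>\<^sub>\<alpha>\<close> is injective on elements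
  supported by \<open>N\<close>.

  Surjectivity: for a compatible family \<open>(t\<^sub>\<alpha>)\<close> let \<open>S\<^sub>\<alpha>\<close> be the least support of \<open>t\<^sub>\<alpha>\<close>. Then
  \<open>R\<^sub>\<alpha>\<^sub>\<beta>\<close> maps \<open>S\<^sub>\<alpha>\<close> onto a superset of \<open>S\<^sub>\<beta>\<close>, so \<open>|S\<^sub>\<alpha>|\<close> is a monotone function of \<open>\<alpha>\<close> into
  the natural numbers; as \<open>\<rho>\<close> has uncountable cofinality it is constant from some \<open>\<alpha>\<^sub>0\<close> on,
  and from there on the \<open>R\<^sub>\<alpha>\<^sub>\<beta>\<close> restrict to bijections \<open>S\<^sub>\<alpha> \<rightarrow> S\<^sub>\<beta>\<close>. Hence every point of
  \<open>S\<^sub>\<alpha>\<^sub>0\<close> lifts to a point of \<open>L\<close>, and pushing a preimage of \<open>t\<^sub>\<alpha>\<^sub>0\<close> in \<open>F S\<^sub>\<alpha>\<^sub>0\<close> along this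
  lift gives a preimage of \<open>t\<close>.\<close>

section \<open>Supports\<close>

locale setfunctor =
  fixes Fo :: "'a set \<Rightarrow> 'b set"
    and Fm :: "'a set \<Rightarrow> 'a set \<Rightarrow> ('a \<Rightarrow> 'a) \<Rightarrow> 'b \<Rightarrow> 'b"
  assumes set_functor: "set_functor Fo Fm"
begin

lemma Fm_in: "f \<in> A \<rightarrow> B \<Longrightarrow> y \<in> Fo A \<Longrightarrow> Fm A B f y \<in> Fo B"
  using set_functor[unfolded set_functor_def, THEN conjunct1] by blast

lemma Fm_cong: "f \<in> A \<rightarrow> B \<Longrightarrow> (\<And>x. x \<in> A \<Longrightarrow> f x = g x) \<Longrightarrow> y \<in> Fo A \<Longrightarrow> Fm A B f y = Fm A B g y"
  using set_functor[unfolded set_functor_def, THEN conjunct2, THEN conjunct1] by blast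

lemma Fm_id: "y \<in> Fo A \<Longrightarrow> Fm A A id y = y"
  using set_functor[unfolded set_functor_def, THEN conjunct2, THEN conjunct2, THEN conjunct1] by blast

lemma Fm_comp:
  assumes "f \<in> A \<rightarrow> B" "g \<in> B \<rightarrow> C" "\<And>x. x \<in> A \<Longrightarrow> h x = g (f x)" "y \<in> Fo A"
  shows "Fm A C h y = Fm B C g (Fm A B f y)"
proof -
  have "Fm A C h y = Fm A C (g \<circ> f) y"
    using assms by (intro Fm_cong[symmetric]) auto
  also have "\<dots> = Fm B C g (Fm A B f y)"
    using assms set_functor[unfolded set_functor_def, THEN conjunct2, THEN conjunct2, THEN conjunct2]
    by blast
  finally show ?thesis .
qed

definition supported :: "'a set \<Rightarrow> 'a set \<Rightarrow> 'b \<Rightarrow> bool" where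
  "supported X A t \<longleftrightarrow> A \<subseteq> X \<and> t \<in> Fm A X id ` Fo A"

lemma supported_Fm_image:
  assumes "w \<in> Fo A" "f \<in> A \<rightarrow> Y"
  shows "supported Y (f ` A) (Fm A Y f w)"
proof -
  have "Fm A Y f w = Fm (f ` A) Y id (Fm A (f ` A) f w)"
    using assms by (intro Fm_comp) auto
  moreover have "Fm A (f ` A) f w \<in> Fo (f ` A)"
    using assms by (intro Fm_in) auto
  ultimately show ?thesis
    using assms unfolding supported_def by auto
qed

lemma supported_image:
  assumes "supported X A t" "f \<in> X \<rightarrow> Y"
  shows "supported Y (f ` A) (Fm X Y f t)"
proof -
  obtain w where w: "w \<in> Fo A" "t = Fm A X id w" and "A \<subseteq> X"
    using assms(1) unfolding supported_def by blast
  have "Fm X Y f t = Fm A Y f w"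
    unfolding w(2) using w(1) \<open>A \<subseteq> X\<close> assms(2) by (intro Fm_comp[symmetric]) auto
  moreover have "f \<in> A \<rightarrow> Y"
    using \<open>A \<subseteq> X\<close> assms(2) by auto
  ultimately show ?thesis
    using supported_Fm_image[OF w(1)] by simp
qed

lemma supported_mono:
  assumes "supported X A t" "A \<subseteq> B" "B \<subseteq> X"
  shows "supported X B t"
proof -
  obtain w where w: "w \<in> Fo A" "t = Fm A X id w"
    using assms(1) unfolding supported_def by blast
  have "t = Fm B X id (Fm A B id w)"
    using w assms by (auto intro!: Fm_comp)
  moreover have "Fm A B id w \<in> Fo B"
    using w assms by (intro Fm_in) auto
  ultimately show ?thesis
    using assms unfolding supported_def by blast
qed

end

locale pullback_setfunctor = setfunctor +
  assumes preserves_mono_pullbacks: "preserves_mono_pullbacks Fo Fm"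
begin

lemma Fm_inj_on:
  assumes "f \<in> A \<rightarrow> B" "inj_on f A"
  shows "inj_on (Fm A B f) (Fo A)"
proof (rule inj_onI)
  have "is_pullback A A A B id id f f"
    using assms unfolding is_pullback_def by (auto dest: inj_onD)
  then have "is_pullback (Fo A) (Fo A) (Fo A) (Fo B) (Fm A A id) (Fm A A id) (Fm A B f) (Fm A B f)"
    using preserves_mono_pullbacks assms(2) unfolding preserves_mono_pullbacks_def by blast
  moreover fix y y' assume "y \<in> Fo A" "y' \<in> Fo A" "Fm A B f y = Fm A B f y'"
  ultimately obtain z where "z \<in> Fo A" "Fm A A id z = y" "Fm A A id z = y'"
    unfolding is_pullback_def by blast
  then show "y = y'"
    using Fm_id by simp
qed

lemma supported_Int:
  assumes "supported X A t" "supported X B t"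
  shows "supported X (A \<inter> B) t"
proof -
  obtain y z where yz: "y \<in> Fo A" "z \<in> Fo B" "t = Fm A X id y" "t = Fm B X id z"
    and AB: "A \<subseteq> X" "B \<subseteq> X"
    using assms unfolding supported_def by blast
  have "is_pullback (A \<inter> B) A B X id id id id"
    using AB unfolding is_pullback_def by auto
  then have "is_pullback (Fo (A \<inter> B)) (Fo A) (Fo B) (Fo X)
      (Fm (A \<inter> B) A id) (Fm (A \<inter> B) B id) (Fm A X id) (Fm B X id)"
    using preserves_mono_pullbacks unfolding preserves_mono_pullbacks_def by auto
  then obtain a where a: "a \<in> Fo (A \<inter> B)" "Fm (A \<inter> B) A id a = y"
    using yz unfolding is_pullback_def by metis
  have "Fm (A \<inter> B) X id a = Fm A X id (Fm (A \<inter> B) A id a)"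
    using a AB by (intro Fm_comp) auto
  then have "t = Fm (A \<inter> B) X id a"
    using a yz by simp
  then show ?thesis
    using a AB unfolding supported_def by blast
qed

lemma supported_eqI:
  assumes "supported X A u" "supported X A v" "f \<in> X \<rightarrow> Y" "inj_on f A"
    and "Fm X Y f u = Fm X Y f v"
  shows "u = v"
proof -
  obtain u' v' where uv: "u' \<in> Fo A" "v' \<in> Fo A" "u = Fm A X id u'" "v = Fm A X id v'"
    and "A \<subseteq> X"
    using assms(1,2) unfolding supported_def by blast
  then have fA: "f \<in> A \<rightarrow> Y"
    using assms(3) by auto
  have "Fm X Y f (Fm A X id w) = Fm A Y f w" if "w \<in> Fo A" for w
    using that \<open>A \<subseteq> X\<close> assms(3) by (intro Fm_comp[symmetric]) auto
  then have "Fm A Y f u' = Fm A Y f v'"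
    using uv assms(5) by simp
  then have "u' = v'"
    using Fm_inj_on[OF fA assms(4)] uv by (auto dest: inj_onD)
  then show ?thesis
    using uv by simp
qed

end

lemma is_colimit_jointly_surjective:
  assumes colim: "is_colimit I le D Dm C \<iota>"
  shows "C \<subseteq> (\<Union>i\<in>I. \<iota> i ` D i)"
proof
  define U where "U = (\<Union>i\<in>I. \<iota> i ` D i)"
  \<comment> \<open>\<open>U\<close> is a subcocone; uniqueness of mediating maps into \<open>C\<close> forces the factorisation of
    \<open>\<iota>\<close> through \<open>U\<close> to be the identity of \<open>C\<close>.\<close>
  have cocone_C: "cocone I le D Dm C \<iota>"
    using colim unfolding is_colimit_def by (rule conjunct1)
  then have "U \<subseteq> C"
    unfolding U_def cocone_def by blast
  note universal = colim[unfolded is_colimit_def, THEN conjunct2, rule_format]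
  have "cocone I le D Dm U \<iota>"
    using cocone_C unfolding cocone_def U_def by blast
  then obtain u where u: "u \<in> C \<rightarrow> U" "\<forall>i\<in>I. \<forall>x\<in>D i. u (\<iota> i x) = \<iota> i x"
    using universal by blast
  obtain w where w: "\<And>v. v \<in> C \<rightarrow> C \<Longrightarrow> \<forall>i\<in>I. \<forall>x\<in>D i. v (\<iota> i x) = \<iota> i x \<Longrightarrow> \<forall>c\<in>C. v c = w c"
    using universal[OF cocone_C] by blast
  fix c assume "c \<in> C"
  have "c = w c"
    using w[of id] \<open>c \<in> C\<close> by simp
  also have "\<dots> = u c"
    using w[of u] u \<open>U \<subseteq> C\<close> \<open>c \<in> C\<close> by fastforce
  also have "u c \<in> U"
    using u(1) \<open>c \<in> C\<close> by blast
  finally show "c \<in> (\<Union>i\<in>I. \<iota> i ` D i)"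
    unfolding U_def .
qed

lemma directed_poset_finite_subsets: "directed_poset {A. finite A \<and> A \<subseteq> X} (\<subseteq>)"
  unfolding directed_poset_def
  by (intro conjI ballI impI; (blast | (rule bexI[of _ "_ \<union> _"]; auto)))

lemma diagram_inclusions: "diagram I (\<subseteq>) (\<lambda>A. A) (\<lambda>A B. id)"
  unfolding diagram_def by auto

lemma is_colimit_finite_subsets:
  "is_colimit {A. finite A \<and> A \<subseteq> X} (\<subseteq>) (\<lambda>A. A) (\<lambda>A B. id) X (\<lambda>A. id)"
  unfolding is_colimit_def
proof (intro conjI allI impI)
  let ?I = "{A. finite A \<and> A \<subseteq> X}"
  show "cocone ?I (\<subseteq>) (\<lambda>A. A) (\<lambda>A B. id) X (\<lambda>A. id)"
    unfolding cocone_def by auto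
  fix T \<tau> assume "cocone ?I (\<subseteq>) (\<lambda>A. A) (\<lambda>A B. id) T \<tau>"
  then have \<tau>: "\<forall>A\<in>?I. \<tau> A \<in> A \<rightarrow> T"
    and \<tau>_compat: "\<forall>A\<in>?I. \<forall>B\<in>?I. A \<subseteq> B \<longrightarrow> (\<forall>x\<in>A. \<tau> B x = \<tau> A x)"
    unfolding cocone_def id_apply by (rule conjunct1, rule conjunct2)
  have singleton: "x \<in> X \<Longrightarrow> {x} \<in> ?I" for x
    by simp
  show "\<exists>u. u \<in> X \<rightarrow> T \<and> (\<forall>A\<in>?I. \<forall>x\<in>A. u (id x) = \<tau> A x) \<and>
      (\<forall>v. v \<in> X \<rightarrow> T \<and> (\<forall>A\<in>?I. \<forall>x\<in>A. v (id x) = \<tau> A x) \<longrightarrow> (\<forall>c\<in>X. v c = u c))"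
  proof (intro exI[of _ "\<lambda>x. \<tau> {x} x"] conjI allI impI ballI)
    show "(\<lambda>x. \<tau> {x} x) \<in> X \<rightarrow> T"
      using \<tau> singleton by blast
    fix A x assume "A \<in> ?I" "x \<in> A"
    then have "{x} \<in> ?I" "{x} \<subseteq> A"
      by auto
    then show "\<tau> {id x} (id x) = \<tau> A x"
      using \<tau>_compat[rule_format, of "{x}" A x] \<open>A \<in> ?I\<close> by simp
  next
    fix v c assume "v \<in> X \<rightarrow> T \<and> (\<forall>A\<in>?I. \<forall>x\<in>A. v (id x) = \<tau> A x)" "c \<in> X"
    then show "v c = \<tau> {c} c"
      using singleton by simp
  qed
qed

locale finitary_pullback_setfunctor = pullback_setfunctor +
  assumes finitary: "finitary Fo Fm"
begin

lemma finite_support: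
  assumes "t \<in> Fo X"
  shows "\<exists>A. finite A \<and> supported X A t"
proof -
  let ?I = "{A. finite A \<and> A \<subseteq> X}"
  have "is_colimit ?I (\<subseteq>) Fo (\<lambda>A B. Fm A B id) (Fo X) (\<lambda>A. Fm A X id)"
    using finitary[unfolded finitary_def, rule_format, OF conjI, OF directed_poset_finite_subsets
        conjI, OF diagram_inclusions is_colimit_finite_subsets]
    by simp
  from is_colimit_jointly_surjective[OF this] assms
  obtain A where "A \<in> ?I" "t \<in> Fm A X id ` Fo A"
    by blast
  then show ?thesis
    unfolding supported_def by blast
qed

lemma least_support:
  assumes "t \<in> Fo X"
  shows "\<exists>S. finite S \<and> supported X S t \<and> (\<forall>B. supported X B t \<longrightarrow> S \<subseteq> B)"
proof -
  obtain A where "finite A \<and> supported X A t"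
    using finite_support[OF assms] by blast
  then obtain S where S: "finite S" "supported X S t"
    and min: "\<forall>A. finite A \<and> supported X A t \<longrightarrow> card S \<le> card A"
    using ex_has_least_nat[of "\<lambda>A. finite A \<and> supported X A t" A card] by blast
  have "S \<subseteq> B" if "supported X B t" for B
  proof -
    have "card S \<le> card (S \<inter> B)"
      using min[rule_format, of "S \<inter> B"] S supported_Int[OF S(2) that] by simp
    then have "S \<inter> B = S"
      using S(1) by (intro card_seteq) auto
    then show ?thesis
      by blast
  qed
  with S show ?thesis
    by blast
qed

definition min_support :: "'a set \<Rightarrow> 'b \<Rightarrow> 'a set" where
  "min_support X t = (THE S. supported X S t \<and> (\<forall>B. supported X B t \<longrightarrow> S \<subseteq> B))"

lemma min_support:
  assumes "t \<in> Fo X"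
  shows "finite (min_support X t)" "supported X (min_support X t) t"
    and "supported X B t \<Longrightarrow> min_support X t \<subseteq> B"
proof -
  obtain S where S: "finite S" "supported X S t" "\<forall>B. supported X B t \<longrightarrow> S \<subseteq> B"
    using least_support[OF assms] by blast
  then have "min_support X t = S"
    unfolding min_support_def by (intro the_equality) auto
  with S show "finite (min_support X t)" "supported X (min_support X t) t"
    and "supported X B t \<Longrightarrow> min_support X t \<subseteq> B"
    by auto
qed

lemma min_support_image:
  assumes "t \<in> Fo X" "f \<in> X \<rightarrow> Y"
  shows "min_support Y (Fm X Y f t) \<subseteq> f ` min_support X t"
  using assms by (intro min_support supported_image Fm_in) auto

end

section \<open>Uncountable regular ordinals\<close>

unbundle cardinal_syntax

lemma uncountable_regular_ordinal_countable_bound: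
  assumes reg: "uncountable_regular_ordinal r" and "countable G" "G \<subseteq> Field r"
  shows "\<exists>b\<in>Field r. \<forall>g\<in>G. (g, b) \<in> r"
proof -
  have wo: "Well_order r" and uncountable: "\<not> countable (Field r)"
    using reg unfolding uncountable_regular_ordinal_def by simp_all
  have "\<not> |Field r| \<le>o |G|"
    using uncountable countable_ordLeq \<open>countable G\<close> by blast
  then have "|G| <o |Field r|"
    using not_ordLeq_iff_ordLess card_of_Well_order by blast
  also have "|Field r| \<le>o r"
    using card_of_least wo by blast
  finally have "|G| <o r" .
  then show ?thesis
    using reg \<open>G \<subseteq> Field r\<close> unfolding uncountable_regular_ordinal_def by blast
qed

lemma uncountable_regular_ordinal_mono_nat_stable:
  fixes f :: "'k \<Rightarrow> nat"
  assumes reg: "uncountable_regular_ordinal r"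
    and mono: "\<And>\<alpha> \<beta>. (\<beta>, \<alpha>) \<in> r \<Longrightarrow> f \<beta> \<le> f \<alpha>"
  shows "\<exists>\<alpha>\<^sub>0\<in>Field r. \<forall>\<alpha>. (\<alpha>\<^sub>0, \<alpha>) \<in> r \<longrightarrow> f \<alpha> = f \<alpha>\<^sub>0"
proof -
  have "\<exists>n. \<forall>\<alpha>\<in>Field r. f \<alpha> \<le> n"
  proof (rule ccontr)
    assume "\<nexists>n. \<forall>\<alpha>\<in>Field r. f \<alpha> \<le> n"
    then have "\<forall>n. \<exists>\<alpha>. \<alpha> \<in> Field r \<and> n < f \<alpha>"
      by (meson not_le)
    then obtain g where g: "\<And>n. g n \<in> Field r" "\<And>n. n < f (g n)"
      by metis
    then obtain b where "b \<in> Field r" "\<forall>\<alpha>\<in>range g. (\<alpha>, b) \<in> r"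
      using uncountable_regular_ordinal_countable_bound[OF reg, of "range g"] by blast
    then have "f (g (f b)) \<le> f b"
      using mono by blast
    with g(2)[of "f b"] show False
      by simp
  qed
  then obtain n where n: "\<forall>\<alpha>\<in>Field r. f \<alpha> \<le> n"
    by blast
  then have "f ` Field r \<subseteq> {..n}"
    by blast
  then have finite: "finite (f ` Field r)"
    by (rule finite_subset) simp
  have "Field r \<noteq> {}"
    using reg unfolding uncountable_regular_ordinal_def by auto
  then have "Max (f ` Field r) \<in> f ` Field r"
    using Max_in[OF finite] by simp
  then obtain \<alpha>\<^sub>0 where \<alpha>\<^sub>0: "Max (f ` Field r) = f \<alpha>\<^sub>0" "\<alpha>\<^sub>0 \<in> Field r"
    by (rule imageE)
  have "f \<alpha> = f \<alpha>\<^sub>0" if "(\<alpha>\<^sub>0, \<alpha>) \<in> r" for \<alpha>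
    using mono[OF that] Max_ge[OF finite, of "f \<alpha>"] FieldI2[OF that] \<alpha>\<^sub>0(1) by simp
  with \<alpha>\<^sub>0(2) show ?thesis
    by blast
qed

section \<open>Limits of \<open>\<rho>\<^sup>o\<^sup>p\<close>-diagrams\<close>

lemma op_limit_eqI:
  assumes lim: "is_op_limit r X R L \<pi>" and "x \<in> L" "x' \<in> L"
    and "\<And>\<alpha>. \<alpha> \<in> Field r \<Longrightarrow> \<pi> \<alpha> x = \<pi> \<alpha> x'"
  shows "x = x'"
proof -
  have "op_cone r X R L \<pi>"
    using lim unfolding is_op_limit_def by (rule conjunct1)
  then have "op_cone r X R {x} \<pi>"
    using \<open>x \<in> L\<close> unfolding op_cone_def by blast
  then obtain u where u: "\<forall>v. v \<in> {x} \<rightarrow> L \<and> (\<forall>\<alpha>\<in>Field r. \<forall>t\<in>{x}. \<pi> \<alpha> (v t) = \<pi> \<alpha> t)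
      \<longrightarrow> (\<forall>t\<in>{x}. v t = u t)"
    using lim[unfolded is_op_limit_def, THEN conjunct2, rule_format] by blast
  have "x = u x"
    using u[rule_format, of "\<lambda>_. x"] \<open>x \<in> L\<close> by simp
  moreover have "x' = u x"
    using u[rule_format, of "\<lambda>_. x'"] \<open>x' \<in> L\<close> assms(4) by simp
  ultimately show ?thesis
    by simp
qed

lemma op_limit_exists:
  fixes X :: "'k \<Rightarrow> 'c set"
  assumes lim: "is_op_limit r X R L \<pi>"
    and "\<And>\<alpha>. \<alpha> \<in> Field r \<Longrightarrow> \<theta> \<alpha> \<in> X \<alpha>" "\<And>\<alpha> \<beta>. (\<beta>, \<alpha>) \<in> r \<Longrightarrow> R \<alpha> \<beta> (\<theta> \<alpha>) = \<theta> \<beta>"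
  shows "\<exists>x\<in>L. \<forall>\<alpha>\<in>Field r. \<pi> \<alpha> x = \<theta> \<alpha>"
proof -
  have "op_cone r X R {undefined :: 'c} (\<lambda>\<alpha> _. \<theta> \<alpha>)"
    using assms(2,3) unfolding op_cone_def by simp
  from lim[unfolded is_op_limit_def, THEN conjunct2, rule_format, OF this]
  obtain u where "u \<in> {undefined :: 'c} \<rightarrow> L" "\<forall>\<alpha>\<in>Field r. \<forall>t\<in>{undefined :: 'c}. \<pi> \<alpha> (u t) = \<theta> \<alpha>"
    by (elim exE conjE) (rule that; assumption)
  then show ?thesis
    by blast
qed

lemma op_limit_inj_on_finite:
  assumes lim: "is_op_limit r X R L \<pi>"
    and directed: "\<And>G. finite G \<Longrightarrow> G \<subseteq> Field r \<Longrightarrow> \<exists>b\<in>Field r. \<forall>g\<in>G. (g, b) \<in> r"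
    and "finite N" "N \<subseteq> L"
  shows "\<exists>\<alpha>\<in>Field r. inj_on (\<pi> \<alpha>) N"
proof -
  have cone: "\<And>\<alpha> \<beta> x. (\<beta>, \<alpha>) \<in> r \<Longrightarrow> x \<in> L \<Longrightarrow> R \<alpha> \<beta> (\<pi> \<alpha> x) = \<pi> \<beta> x"
    using lim unfolding is_op_limit_def op_cone_def by blast
  define P where "P = {(x, y) \<in> N \<times> N. x \<noteq> y}"
  have "\<forall>p\<in>P. \<exists>\<alpha>. \<alpha> \<in> Field r \<and> \<pi> \<alpha> (fst p) \<noteq> \<pi> \<alpha> (snd p)"
  proof
    fix p assume "p \<in> P"
    then have "fst p \<in> L" "snd p \<in> L" "fst p \<noteq> snd p"
      using \<open>N \<subseteq> L\<close> unfolding P_def by auto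
    then show "\<exists>\<alpha>. \<alpha> \<in> Field r \<and> \<pi> \<alpha> (fst p) \<noteq> \<pi> \<alpha> (snd p)"
      using op_limit_eqI[OF lim, of "fst p" "snd p"] by blast
  qed
  from bchoice[OF this] obtain sep
    where sep: "\<forall>p\<in>P. sep p \<in> Field r \<and> \<pi> (sep p) (fst p) \<noteq> \<pi> (sep p) (snd p)" ..
  have "P \<subseteq> N \<times> N"
    unfolding P_def by blast
  then have "finite (sep ` P)"
    using \<open>finite N\<close> by (simp add: finite_subset)
  moreover have "sep ` P \<subseteq> Field r"
    using sep by auto
  ultimately obtain b where b: "b \<in> Field r" "\<forall>\<alpha>\<in>sep ` P. (\<alpha>, b) \<in> r"
    using directed by blast
  have "inj_on (\<pi> b) N"
  proof (rule inj_onI, rule ccontr)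
    fix x y assume "x \<in> N" "y \<in> N" "\<pi> b x = \<pi> b y" "x \<noteq> y"
    then have xy: "(x, y) \<in> P" and "x \<in> L" "y \<in> L"
      using \<open>N \<subseteq> L\<close> unfolding P_def by auto
    then have "\<pi> (sep (x, y)) x = \<pi> (sep (x, y)) y"
      using cone[of "sep (x, y)" b] b(2) \<open>\<pi> b x = \<pi> b y\<close> by (metis imageI)
    with sep[rule_format, OF xy] show False
      by simp
  qed
  with b(1) show ?thesis
    by blast
qed

lemma op_diagram_extend_thread:
  assumes wo: "Well_order r" and diag: "op_diagram r X R" and "\<alpha>\<^sub>0 \<in> Field r"
    and \<theta>_in: "\<And>\<alpha>. (\<alpha>\<^sub>0, \<alpha>) \<in> r \<Longrightarrow> \<theta> \<alpha> \<in> X \<alpha>"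
    and \<theta>_R: "\<And>\<alpha> \<beta>. (\<alpha>\<^sub>0, \<beta>) \<in> r \<Longrightarrow> (\<beta>, \<alpha>) \<in> r \<Longrightarrow> R \<alpha> \<beta> (\<theta> \<alpha>) = \<theta> \<beta>"
  shows "\<exists>\<theta>'. (\<forall>\<alpha>\<in>Field r. \<theta>' \<alpha> \<in> X \<alpha>) \<and> (\<forall>\<alpha> \<beta>. (\<beta>, \<alpha>) \<in> r \<longrightarrow> R \<alpha> \<beta> (\<theta>' \<alpha>) = \<theta>' \<beta>) \<and>
    (\<forall>\<alpha>. (\<alpha>\<^sub>0, \<alpha>) \<in> r \<longrightarrow> \<theta>' \<alpha> = \<theta> \<alpha>)"
proof -
  interpret wo_rel r
    using wo unfolding wo_rel_def .
  have R_in: "\<And>\<alpha> \<beta> x. (\<beta>, \<alpha>) \<in> r \<Longrightarrow> x \<in> X \<alpha> \<Longrightarrow> R \<alpha> \<beta> x \<in> X \<beta>"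
    and R_comp: "\<And>\<alpha> \<beta> \<gamma> x. (\<beta>, \<alpha>) \<in> r \<Longrightarrow> (\<gamma>, \<beta>) \<in> r \<Longrightarrow> x \<in> X \<alpha> \<Longrightarrow> R \<beta> \<gamma> (R \<alpha> \<beta> x) = R \<alpha> \<gamma> x"
    using diag unfolding op_diagram_def by blast+
  have refl0: "(\<alpha>\<^sub>0, \<alpha>\<^sub>0) \<in> r"
    using REFL \<open>\<alpha>\<^sub>0 \<in> Field r\<close> by (simp add: refl_on_def)
  have below: "(\<alpha>, \<alpha>\<^sub>0) \<in> r" if "\<alpha> \<in> Field r" "(\<alpha>\<^sub>0, \<alpha>) \<notin> r" for \<alpha>
    using TOTALS that \<open>\<alpha>\<^sub>0 \<in> Field r\<close> by blast
  define \<theta>' where "\<theta>' \<alpha> = (if (\<alpha>\<^sub>0, \<alpha>) \<in> r then \<theta> \<alpha> else R \<alpha>\<^sub>0 \<alpha> (\<theta> \<alpha>\<^sub>0))" for \<alpha>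
  have "R \<alpha> \<beta> (\<theta>' \<alpha>) = \<theta>' \<beta>" if "(\<beta>, \<alpha>) \<in> r" for \<alpha> \<beta>
  proof (cases "(\<alpha>\<^sub>0, \<beta>) \<in> r")
    case True
    then have "(\<alpha>\<^sub>0, \<alpha>) \<in> r"
      using TRANS that by (meson transD)
    with True show ?thesis
      using \<theta>_R[OF True that] unfolding \<theta>'_def by simp
  next
    case \<beta>_not_above: False
    then have "(\<beta>, \<alpha>\<^sub>0) \<in> r"
      using below FieldI1[OF that] by blast
    show ?thesis
    proof (cases "(\<alpha>\<^sub>0, \<alpha>) \<in> r")
      case True
      then show ?thesis
        using R_comp[OF True \<open>(\<beta>, \<alpha>\<^sub>0) \<in> r\<close> \<theta>_in[OF True]] \<theta>_R[OF refl0 True] \<beta>_not_above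
        unfolding \<theta>'_def by simp
    next
      case False
      then have "(\<alpha>, \<alpha>\<^sub>0) \<in> r"
        using below FieldI2[OF that] by blast
      then show ?thesis
        using R_comp[OF _ that \<theta>_in[OF refl0]] False \<beta>_not_above unfolding \<theta>'_def by simp
    qed
  qed
  moreover have "\<theta>' \<alpha> \<in> X \<alpha>" if "\<alpha> \<in> Field r" for \<alpha>
    using \<theta>_in R_in[OF below[OF that] \<theta>_in[OF refl0]] unfolding \<theta>'_def by auto
  moreover have "\<theta>' \<alpha> = \<theta> \<alpha>" if "(\<alpha>\<^sub>0, \<alpha>) \<in> r" for \<alpha>
    using that unfolding \<theta>'_def by simp
  ultimately show ?thesis
    by blast
qed

lemma op_diagram_thread_through:
  assumes wo: "Well_order r" and diag: "op_diagram r X R" and "\<alpha>\<^sub>0 \<in> Field r"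
    and S: "\<And>\<alpha>. (\<alpha>\<^sub>0, \<alpha>) \<in> r \<Longrightarrow> S \<alpha> \<subseteq> X \<alpha>"
    and bij: "\<And>\<alpha> \<beta>. (\<alpha>\<^sub>0, \<beta>) \<in> r \<Longrightarrow> (\<beta>, \<alpha>) \<in> r \<Longrightarrow> bij_betw (R \<alpha> \<beta>) (S \<alpha>) (S \<beta>)"
    and s: "s \<in> S \<alpha>\<^sub>0"
  shows "\<exists>\<theta>. (\<forall>\<alpha>\<in>Field r. \<theta> \<alpha> \<in> X \<alpha>) \<and> (\<forall>\<alpha> \<beta>. (\<beta>, \<alpha>) \<in> r \<longrightarrow> R \<alpha> \<beta> (\<theta> \<alpha>) = \<theta> \<beta>) \<and>
    \<theta> \<alpha>\<^sub>0 = s \<and> (\<forall>\<alpha>. (\<alpha>\<^sub>0, \<alpha>) \<in> r \<longrightarrow> \<theta> \<alpha> \<in> S \<alpha>)"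
proof -
  interpret wo_rel r
    using wo unfolding wo_rel_def .
  have R_comp: "\<And>\<alpha> \<beta> \<gamma> x. (\<beta>, \<alpha>) \<in> r \<Longrightarrow> (\<gamma>, \<beta>) \<in> r \<Longrightarrow> x \<in> X \<alpha> \<Longrightarrow> R \<beta> \<gamma> (R \<alpha> \<beta> x) = R \<alpha> \<gamma> x"
    using diag unfolding op_diagram_def by blast
  have refl0: "(\<alpha>\<^sub>0, \<alpha>\<^sub>0) \<in> r"
    using REFL \<open>\<alpha>\<^sub>0 \<in> Field r\<close> by (simp add: refl_on_def)
  define \<theta> where "\<theta> \<alpha> = the_inv_into (S \<alpha>) (R \<alpha> \<alpha>\<^sub>0) s" for \<alpha>
  have above: "\<theta> \<alpha> \<in> S \<alpha>" "R \<alpha> \<alpha>\<^sub>0 (\<theta> \<alpha>) = s" if "(\<alpha>\<^sub>0, \<alpha>) \<in> r" for \<alpha>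
    using s bij_betw_the_inv_into[OF bij[OF refl0 that]] f_the_inv_into_f_bij_betw[OF bij[OF refl0 that]]
    unfolding \<theta>_def by (auto simp: bij_betw_def)
  have "R \<alpha> \<beta> (\<theta> \<alpha>) = \<theta> \<beta>" if "(\<alpha>\<^sub>0, \<beta>) \<in> r" "(\<beta>, \<alpha>) \<in> r" for \<alpha> \<beta>
  proof -
    have "(\<alpha>\<^sub>0, \<alpha>) \<in> r"
      using TRANS that by (meson transD)
    have "R \<alpha> \<beta> (\<theta> \<alpha>) \<in> S \<beta>"
      using bij[OF that] above(1)[OF \<open>(\<alpha>\<^sub>0, \<alpha>) \<in> r\<close>] by (auto simp: bij_betw_def)
    moreover have "R \<beta> \<alpha>\<^sub>0 (R \<alpha> \<beta> (\<theta> \<alpha>)) = R \<beta> \<alpha>\<^sub>0 (\<theta> \<beta>)"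
      using R_comp[OF that(2,1)] above[OF \<open>(\<alpha>\<^sub>0, \<alpha>) \<in> r\<close>] above(2)[OF that(1)]
        S[OF \<open>(\<alpha>\<^sub>0, \<alpha>) \<in> r\<close>] by auto
    ultimately show ?thesis
      using bij[OF refl0 that(1)] above(1)[OF that(1)] unfolding bij_betw_def by (auto dest: inj_onD)
  qed
  then obtain \<theta>' where \<theta>': "\<forall>\<alpha>\<in>Field r. \<theta>' \<alpha> \<in> X \<alpha>" "\<forall>\<alpha> \<beta>. (\<beta>, \<alpha>) \<in> r \<longrightarrow> R \<alpha> \<beta> (\<theta>' \<alpha>) = \<theta>' \<beta>"
    "\<forall>\<alpha>. (\<alpha>\<^sub>0, \<alpha>) \<in> r \<longrightarrow> \<theta>' \<alpha> = \<theta> \<alpha>"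
    using op_diagram_extend_thread[OF wo diag \<open>\<alpha>\<^sub>0 \<in> Field r\<close>, of \<theta>] above(1) S by blast
  have "\<theta> \<alpha>\<^sub>0 = s"
    using above[OF refl0] S[OF refl0] diag \<open>\<alpha>\<^sub>0 \<in> Field r\<close> unfolding op_diagram_def by auto
  with \<theta>' above(1) refl0 show ?thesis
    by (intro exI[of _ \<theta>']) simp
qed

lemma op_limit_lift_stable_part:
  assumes wo: "Well_order r" and diag: "op_diagram r X R" and lim: "is_op_limit r X R L \<pi>"
    and "\<alpha>\<^sub>0 \<in> Field r"
    and S: "\<And>\<alpha>. (\<alpha>\<^sub>0, \<alpha>) \<in> r \<Longrightarrow> S \<alpha> \<subseteq> X \<alpha>"
    and bij: "\<And>\<alpha> \<beta>. (\<alpha>\<^sub>0, \<beta>) \<in> r \<Longrightarrow> (\<beta>, \<alpha>) \<in> r \<Longrightarrow> bij_betw (R \<alpha> \<beta>) (S \<alpha>) (S \<beta>)"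
  obtains m where "m \<in> S \<alpha>\<^sub>0 \<rightarrow> L" "\<And>s. s \<in> S \<alpha>\<^sub>0 \<Longrightarrow> \<pi> \<alpha>\<^sub>0 (m s) = s"
    "\<And>s \<alpha>. s \<in> S \<alpha>\<^sub>0 \<Longrightarrow> (\<alpha>\<^sub>0, \<alpha>) \<in> r \<Longrightarrow> \<pi> \<alpha> (m s) \<in> S \<alpha>"
proof -
  have "\<forall>s\<in>S \<alpha>\<^sub>0. \<exists>x. x \<in> L \<and> \<pi> \<alpha>\<^sub>0 x = s \<and> (\<forall>\<alpha>. (\<alpha>\<^sub>0, \<alpha>) \<in> r \<longrightarrow> \<pi> \<alpha> x \<in> S \<alpha>)"
  proof
    fix s assume "s \<in> S \<alpha>\<^sub>0"
    then obtain \<theta> where \<theta>: "\<forall>\<alpha>\<in>Field r. \<theta> \<alpha> \<in> X \<alpha>" "\<forall>\<alpha> \<beta>. (\<beta>, \<alpha>) \<in> r \<longrightarrow> R \<alpha> \<beta> (\<theta> \<alpha>) = \<theta> \<beta>"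
      "\<theta> \<alpha>\<^sub>0 = s" "\<forall>\<alpha>. (\<alpha>\<^sub>0, \<alpha>) \<in> r \<longrightarrow> \<theta> \<alpha> \<in> S \<alpha>"
      using op_diagram_thread_through[OF wo diag \<open>\<alpha>\<^sub>0 \<in> Field r\<close> S bij] by blast
    then obtain x where x: "x \<in> L" "\<forall>\<alpha>\<in>Field r. \<pi> \<alpha> x = \<theta> \<alpha>"
      using op_limit_exists[OF lim, of \<theta>] by blast
    then have "\<pi> \<alpha> x = \<theta> \<alpha>" if "(\<alpha>\<^sub>0, \<alpha>) \<in> r" for \<alpha>
      using FieldI2[OF that] by blast
    with x(1) \<theta>(3,4) \<open>\<alpha>\<^sub>0 \<in> Field r\<close>
    show "\<exists>x. x \<in> L \<and> \<pi> \<alpha>\<^sub>0 x = s \<and> (\<forall>\<alpha>. (\<alpha>\<^sub>0, \<alpha>) \<in> r \<longrightarrow> \<pi> \<alpha> x \<in> S \<alpha>)"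
      by (intro exI[of _ x]) (use x(2) in auto)
  qed
  from bchoice[OF this] obtain m
    where "\<forall>s\<in>S \<alpha>\<^sub>0. m s \<in> L \<and> \<pi> \<alpha>\<^sub>0 (m s) = s \<and> (\<forall>\<alpha>. (\<alpha>\<^sub>0, \<alpha>) \<in> r \<longrightarrow> \<pi> \<alpha> (m s) \<in> S \<alpha>)" ..
  then show thesis
    by (intro that) auto
qed

section \<open>The comparison map\<close>

context setfunctor
begin

lemma Fm_op_cone:
  assumes diag: "op_diagram r X R" and cone: "op_cone r X R L \<pi>" and "(\<beta>, \<alpha>) \<in> r" "y \<in> Fo L"
  shows "Fm (X \<alpha>) (X \<beta>) (R \<alpha> \<beta>) (Fm L (X \<alpha>) (\<pi> \<alpha>) y) = Fm L (X \<beta>) (\<pi> \<beta>) y"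
proof -
  have "\<pi> \<alpha> \<in> L \<rightarrow> X \<alpha>"
    using cone FieldI2[OF \<open>(\<beta>, \<alpha>) \<in> r\<close>] unfolding op_cone_def by blast
  moreover have "R \<alpha> \<beta> \<in> X \<alpha> \<rightarrow> X \<beta>"
    using diag \<open>(\<beta>, \<alpha>) \<in> r\<close> unfolding op_diagram_def by blast
  moreover have "\<pi> \<beta> x = R \<alpha> \<beta> (\<pi> \<alpha> x)" if "x \<in> L" for x
    using cone \<open>(\<beta>, \<alpha>) \<in> r\<close> that unfolding op_cone_def by simp
  ultimately show ?thesis
    using Fm_comp[of "\<pi> \<alpha>" L "X \<alpha>" "R \<alpha> \<beta>" "X \<beta>" "\<pi> \<beta>" y] \<open>y \<in> Fo L\<close> by simp
qed

lemma comparison_in_op_threads: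
  assumes diag: "op_diagram r X R" and cone: "op_cone r X R L \<pi>" and "y \<in> Fo L"
  shows "(\<lambda>\<alpha>\<in>Field r. Fm L (X \<alpha>) (\<pi> \<alpha>) y) \<in> op_threads r (\<lambda>\<alpha>. Fo (X \<alpha>)) (\<lambda>\<alpha> \<beta>. Fm (X \<alpha>) (X \<beta>) (R \<alpha> \<beta>))"
  unfolding op_threads_def
proof (intro CollectI conjI allI impI ballI)
  show "(\<lambda>\<alpha>\<in>Field r. Fm L (X \<alpha>) (\<pi> \<alpha>) y) \<in> extensional (Field r)"
    by simp
  fix \<alpha> assume "\<alpha> \<in> Field r"
  then have "\<pi> \<alpha> \<in> L \<rightarrow> X \<alpha>"
    using cone unfolding op_cone_def by blast
  with \<open>\<alpha> \<in> Field r\<close> show "(\<lambda>\<alpha>\<in>Field r. Fm L (X \<alpha>) (\<pi> \<alpha>) y) \<alpha> \<in> Fo (X \<alpha>)"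
    using Fm_in \<open>y \<in> Fo L\<close> by simp
next
  fix \<alpha> \<beta> assume "(\<beta>, \<alpha>) \<in> r"
  then show "Fm (X \<alpha>) (X \<beta>) (R \<alpha> \<beta>) ((\<lambda>\<alpha>\<in>Field r. Fm L (X \<alpha>) (\<pi> \<alpha>) y) \<alpha>) =
      (\<lambda>\<alpha>\<in>Field r. Fm L (X \<alpha>) (\<pi> \<alpha>) y) \<beta>"
    using Fm_op_cone[OF diag cone _ \<open>y \<in> Fo L\<close>] FieldI1[of \<beta> \<alpha> r] FieldI2[of \<beta> \<alpha> r] by simp
qed

lemma comparison_eq_thread_from:
  assumes wo: "Well_order r" and diag: "op_diagram r X R" and cone: "op_cone r X R L \<pi>"
    and y: "y \<in> Fo L" and t: "t \<in> op_threads r (\<lambda>\<alpha>. Fo (X \<alpha>)) (\<lambda>\<alpha> \<beta>. Fm (X \<alpha>) (X \<beta>) (R \<alpha> \<beta>))"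
    and "\<alpha>\<^sub>0 \<in> Field r" and eq: "\<And>\<alpha>. (\<alpha>\<^sub>0, \<alpha>) \<in> r \<Longrightarrow> Fm L (X \<alpha>) (\<pi> \<alpha>) y = t \<alpha>"
  shows "t = (\<lambda>\<alpha>\<in>Field r. Fm L (X \<alpha>) (\<pi> \<alpha>) y)"
proof (rule extensionalityI[of _ "Field r"])
  interpret wo_rel r
    using wo unfolding wo_rel_def .
  show "t \<in> extensional (Field r)"
    using t unfolding op_threads_def by blast
  show "(\<lambda>\<alpha>\<in>Field r. Fm L (X \<alpha>) (\<pi> \<alpha>) y) \<in> extensional (Field r)"
    by simp
  fix \<alpha> assume "\<alpha> \<in> Field r"
  show "t \<alpha> = (\<lambda>\<alpha>\<in>Field r. Fm L (X \<alpha>) (\<pi> \<alpha>) y) \<alpha>"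
  proof (cases "(\<alpha>\<^sub>0, \<alpha>) \<in> r")
    case True
    then show ?thesis
      using eq \<open>\<alpha> \<in> Field r\<close> by simp
  next
    case False
    then have "(\<alpha>, \<alpha>\<^sub>0) \<in> r"
      using TOTALS \<open>\<alpha> \<in> Field r\<close> \<open>\<alpha>\<^sub>0 \<in> Field r\<close> by blast
    moreover have "(\<alpha>\<^sub>0, \<alpha>\<^sub>0) \<in> r"
      using REFL \<open>\<alpha>\<^sub>0 \<in> Field r\<close> by (simp add: refl_on_def)
    moreover have "Fm (X \<alpha>\<^sub>0) (X \<alpha>) (R \<alpha>\<^sub>0 \<alpha>) (t \<alpha>\<^sub>0) = t \<alpha>"
      using t \<open>(\<alpha>, \<alpha>\<^sub>0) \<in> r\<close> unfolding op_threads_def by blast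
    ultimately show ?thesis
      using Fm_op_cone[OF diag cone \<open>(\<alpha>, \<alpha>\<^sub>0) \<in> r\<close> y] eq \<open>\<alpha> \<in> Field r\<close> by simp
  qed
qed

end

context pullback_setfunctor
begin

lemma comparison_preimage_from_lifted_support:
  assumes diag: "op_diagram r X R" and cone: "op_cone r X R L \<pi>"
    and t: "t \<in> op_threads r (\<lambda>\<alpha>. Fo (X \<alpha>)) (\<lambda>\<alpha> \<beta>. Fm (X \<alpha>) (X \<beta>) (R \<alpha> \<beta>))"
    and refl0: "(\<alpha>\<^sub>0, \<alpha>\<^sub>0) \<in> r"
    and supp: "\<And>\<alpha>. (\<alpha>\<^sub>0, \<alpha>) \<in> r \<Longrightarrow> supported (X \<alpha>) (S \<alpha>) (t \<alpha>)"
    and inj: "\<And>\<alpha>. (\<alpha>\<^sub>0, \<alpha>) \<in> r \<Longrightarrow> inj_on (R \<alpha> \<alpha>\<^sub>0) (S \<alpha>)"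
    and m: "m \<in> S \<alpha>\<^sub>0 \<rightarrow> L" "\<And>s. s \<in> S \<alpha>\<^sub>0 \<Longrightarrow> \<pi> \<alpha>\<^sub>0 (m s) = s"
      "\<And>s \<alpha>. s \<in> S \<alpha>\<^sub>0 \<Longrightarrow> (\<alpha>\<^sub>0, \<alpha>) \<in> r \<Longrightarrow> \<pi> \<alpha> (m s) \<in> S \<alpha>"
  shows "\<exists>y\<in>Fo L. \<forall>\<alpha>. (\<alpha>\<^sub>0, \<alpha>) \<in> r \<longrightarrow> Fm L (X \<alpha>) (\<pi> \<alpha>) y = t \<alpha>"
proof -
  have \<pi>_in: "\<pi> \<alpha> \<in> L \<rightarrow> X \<alpha>" if "(\<alpha>\<^sub>0, \<alpha>) \<in> r" for \<alpha>
    using cone FieldI2[OF that] unfolding op_cone_def by blast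
  have S_sub: "S \<alpha> \<subseteq> X \<alpha>" if "(\<alpha>\<^sub>0, \<alpha>) \<in> r" for \<alpha>
    using supp[OF that] unfolding supported_def by blast
  obtain w where w: "w \<in> Fo (S \<alpha>\<^sub>0)" "t \<alpha>\<^sub>0 = Fm (S \<alpha>\<^sub>0) (X \<alpha>\<^sub>0) id w"
    using supp[OF refl0] unfolding supported_def by blast
  define y where "y = Fm (S \<alpha>\<^sub>0) L m w"
  have y: "y \<in> Fo L"
    unfolding y_def using Fm_in[OF m(1) w(1)] .
  have y_proj: "Fm L (X \<alpha>) (\<pi> \<alpha>) y = Fm (S \<alpha>\<^sub>0) (X \<alpha>) (\<lambda>s. \<pi> \<alpha> (m s)) w" if "(\<alpha>\<^sub>0, \<alpha>) \<in> r" for \<alpha>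
    unfolding y_def using Fm_comp[OF m(1) \<pi>_in[OF that] _ w(1), of "\<lambda>s. \<pi> \<alpha> (m s)"] by simp
  have y_proj0: "Fm L (X \<alpha>\<^sub>0) (\<pi> \<alpha>\<^sub>0) y = t \<alpha>\<^sub>0"
  proof -
    have "Fm (S \<alpha>\<^sub>0) (X \<alpha>\<^sub>0) (\<lambda>s. \<pi> \<alpha>\<^sub>0 (m s)) w = Fm (S \<alpha>\<^sub>0) (X \<alpha>\<^sub>0) id w"
      using w(1) m(2) S_sub[OF refl0] by (intro Fm_cong) auto
    then show ?thesis
      using y_proj[OF refl0] w(2) by simp
  qed
  have "Fm L (X \<alpha>) (\<pi> \<alpha>) y = t \<alpha>" if "(\<alpha>\<^sub>0, \<alpha>) \<in> r" for \<alpha>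
  proof (rule supported_eqI)
    have "(\<lambda>s. \<pi> \<alpha> (m s)) \<in> S \<alpha>\<^sub>0 \<rightarrow> X \<alpha>" "(\<lambda>s. \<pi> \<alpha> (m s)) ` S \<alpha>\<^sub>0 \<subseteq> S \<alpha>"
      using m(3)[OF _ that] S_sub[OF that] by auto
    then show "supported (X \<alpha>) (S \<alpha>) (Fm L (X \<alpha>) (\<pi> \<alpha>) y)"
      using supported_mono[OF supported_Fm_image[OF w(1)]] S_sub[OF that] y_proj[OF that] by simp
    show "supported (X \<alpha>) (S \<alpha>) (t \<alpha>)"
      using supp[OF that] .
    show "R \<alpha> \<alpha>\<^sub>0 \<in> X \<alpha> \<rightarrow> X \<alpha>\<^sub>0"
      using diag that unfolding op_diagram_def by blast
    show "inj_on (R \<alpha> \<alpha>\<^sub>0) (S \<alpha>)"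
      using inj[OF that] .
    have "Fm (X \<alpha>) (X \<alpha>\<^sub>0) (R \<alpha> \<alpha>\<^sub>0) (t \<alpha>) = t \<alpha>\<^sub>0"
      using t that unfolding op_threads_def by blast
    then show "Fm (X \<alpha>) (X \<alpha>\<^sub>0) (R \<alpha> \<alpha>\<^sub>0) (Fm L (X \<alpha>) (\<pi> \<alpha>) y) = Fm (X \<alpha>) (X \<alpha>\<^sub>0) (R \<alpha> \<alpha>\<^sub>0) (t \<alpha>)"
      using Fm_op_cone[OF diag cone that y] y_proj0 by simp
  qed
  with y show ?thesis
    by blast
qed

end

context finitary_pullback_setfunctor
begin

lemma comparison_inj:
  assumes lim: "is_op_limit r X R L \<pi>"
    and directed: "\<And>G. finite G \<Longrightarrow> G \<subseteq> Field r \<Longrightarrow> \<exists>b\<in>Field r. \<forall>g\<in>G. (g, b) \<in> r"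
  shows "inj_on (\<lambda>y. \<lambda>\<alpha>\<in>Field r. Fm L (X \<alpha>) (\<pi> \<alpha>) y) (Fo L)"
proof (rule inj_onI)
  fix y y' assume "y \<in> Fo L" "y' \<in> Fo L"
    and eq: "(\<lambda>\<alpha>\<in>Field r. Fm L (X \<alpha>) (\<pi> \<alpha>) y) = (\<lambda>\<alpha>\<in>Field r. Fm L (X \<alpha>) (\<pi> \<alpha>) y')"
  obtain A where A: "finite A" "supported L A y"
    using finite_support[OF \<open>y \<in> Fo L\<close>] by blast
  obtain A' where A': "finite A'" "supported L A' y'"
    using finite_support[OF \<open>y' \<in> Fo L\<close>] by blast
  let ?N = "A \<union> A'"
  have "?N \<subseteq> L"
    using A(2) A'(2) unfolding supported_def by blast
  then have supp: "supported L ?N y" "supported L ?N y'"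
    using supported_mono A(2) A'(2) by blast+
  obtain \<alpha> where "\<alpha> \<in> Field r" "inj_on (\<pi> \<alpha>) ?N"
    using op_limit_inj_on_finite[OF lim directed _ \<open>?N \<subseteq> L\<close>] A(1) A'(1) by blast
  moreover have "\<pi> \<alpha> \<in> L \<rightarrow> X \<alpha>"
    using lim \<open>\<alpha> \<in> Field r\<close> unfolding is_op_limit_def op_cone_def by blast
  moreover have "Fm L (X \<alpha>) (\<pi> \<alpha>) y = Fm L (X \<alpha>) (\<pi> \<alpha>) y'"
    using fun_cong[OF eq, of \<alpha>] \<open>\<alpha> \<in> Field r\<close> by simp
  ultimately show "y = y'"
    using supported_eqI[OF supp] by blast
qed

lemma thread_min_supports_eventually_bij:
  assumes reg: "uncountable_regular_ordinal r" and diag: "op_diagram r X R"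
    and t: "t \<in> op_threads r (\<lambda>\<alpha>. Fo (X \<alpha>)) (\<lambda>\<alpha> \<beta>. Fm (X \<alpha>) (X \<beta>) (R \<alpha> \<beta>))"
  shows "\<exists>\<alpha>\<^sub>0\<in>Field r. \<forall>\<alpha> \<beta>. (\<alpha>\<^sub>0, \<beta>) \<in> r \<and> (\<beta>, \<alpha>) \<in> r \<longrightarrow>
    bij_betw (R \<alpha> \<beta>) (min_support (X \<alpha>) (t \<alpha>)) (min_support (X \<beta>) (t \<beta>))"
proof -
  define S where "S \<alpha> = min_support (X \<alpha>) (t \<alpha>)" for \<alpha>
  interpret wo_rel r
    using reg unfolding uncountable_regular_ordinal_def wo_rel_def by blast
  have t_in: "\<And>\<alpha>. \<alpha> \<in> Field r \<Longrightarrow> t \<alpha> \<in> Fo (X \<alpha>)"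
    and t_R: "\<And>\<alpha> \<beta>. (\<beta>, \<alpha>) \<in> r \<Longrightarrow> Fm (X \<alpha>) (X \<beta>) (R \<alpha> \<beta>) (t \<alpha>) = t \<beta>"
    using t unfolding op_threads_def by blast+
  have R_in: "\<And>\<alpha> \<beta>. (\<beta>, \<alpha>) \<in> r \<Longrightarrow> R \<alpha> \<beta> \<in> X \<alpha> \<rightarrow> X \<beta>"
    using diag unfolding op_diagram_def by blast
  have fin: "\<And>\<alpha>. \<alpha> \<in> Field r \<Longrightarrow> finite (S \<alpha>)"
    unfolding S_def using min_support(1) t_in by blast
  have img: "S \<beta> \<subseteq> R \<alpha> \<beta> ` S \<alpha>" if "(\<beta>, \<alpha>) \<in> r" for \<alpha> \<beta>
    using min_support_image[OF t_in[OF FieldI2[OF that]] R_in[OF that]] t_R[OF that]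
    unfolding S_def by simp
  have card_le: "card (S \<beta>) \<le> card (R \<alpha> \<beta> ` S \<alpha>)" "card (R \<alpha> \<beta> ` S \<alpha>) \<le> card (S \<alpha>)"
    if "(\<beta>, \<alpha>) \<in> r" for \<alpha> \<beta>
    using card_mono[OF finite_imageI[OF fin[OF FieldI2[OF that]]] img[OF that]]
      card_image_le[OF fin[OF FieldI2[OF that]]] by simp_all
  obtain \<alpha>\<^sub>0 where "\<alpha>\<^sub>0 \<in> Field r" and stable: "\<And>\<alpha>. (\<alpha>\<^sub>0, \<alpha>) \<in> r \<Longrightarrow> card (S \<alpha>) = card (S \<alpha>\<^sub>0)"
    using uncountable_regular_ordinal_mono_nat_stable[OF reg, of "\<lambda>\<alpha>. card (S \<alpha>)"] card_le
    by (meson order_trans)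
  have "bij_betw (R \<alpha> \<beta>) (S \<alpha>) (S \<beta>)" if "(\<alpha>\<^sub>0, \<beta>) \<in> r" "(\<beta>, \<alpha>) \<in> r" for \<alpha> \<beta>
  proof -
    have "(\<alpha>\<^sub>0, \<alpha>) \<in> r"
      using TRANS that by (meson transD)
    then have "card (S \<beta>) = card (S \<alpha>)"
      using stable that(1) by simp
    then have "card (R \<alpha> \<beta> ` S \<alpha>) = card (S \<alpha>)" "card (R \<alpha> \<beta> ` S \<alpha>) \<le> card (S \<beta>)"
      using card_le[OF that(2)] by simp_all
    moreover have "finite (S \<alpha>)"
      using fin FieldI2[OF that(2)] by blast
    ultimately have "S \<beta> = R \<alpha> \<beta> ` S \<alpha>" "inj_on (R \<alpha> \<beta>) (S \<alpha>)"
      using card_seteq[OF finite_imageI img[OF that(2)]] inj_on_iff_eq_card by auto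
    then show ?thesis
      unfolding bij_betw_def by simp
  qed
  with \<open>\<alpha>\<^sub>0 \<in> Field r\<close> show ?thesis
    unfolding S_def by blast
qed

lemma comparison_surj:
  assumes reg: "uncountable_regular_ordinal r" and diag: "op_diagram r X R"
    and lim: "is_op_limit r X R L \<pi>"
    and t: "t \<in> op_threads r (\<lambda>\<alpha>. Fo (X \<alpha>)) (\<lambda>\<alpha> \<beta>. Fm (X \<alpha>) (X \<beta>) (R \<alpha> \<beta>))"
  shows "t \<in> (\<lambda>y. \<lambda>\<alpha>\<in>Field r. Fm L (X \<alpha>) (\<pi> \<alpha>) y) ` Fo L"
proof -
  define S where "S \<alpha> = min_support (X \<alpha>) (t \<alpha>)" for \<alpha>
  have wo: "Well_order r"
    using reg unfolding uncountable_regular_ordinal_def by blast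
  have cone: "op_cone r X R L \<pi>"
    using lim unfolding is_op_limit_def by blast
  obtain \<alpha>\<^sub>0 where "\<alpha>\<^sub>0 \<in> Field r"
    and bij: "\<And>\<alpha> \<beta>. (\<alpha>\<^sub>0, \<beta>) \<in> r \<Longrightarrow> (\<beta>, \<alpha>) \<in> r \<Longrightarrow> bij_betw (R \<alpha> \<beta>) (S \<alpha>) (S \<beta>)"
    using thread_min_supports_eventually_bij[OF reg diag t] unfolding S_def by blast
  have refl0: "(\<alpha>\<^sub>0, \<alpha>\<^sub>0) \<in> r"
    using wo \<open>\<alpha>\<^sub>0 \<in> Field r\<close> unfolding order_on_defs by (simp add: refl_on_def)
  have supp: "supported (X \<alpha>) (S \<alpha>) (t \<alpha>)" if "(\<alpha>\<^sub>0, \<alpha>) \<in> r" for \<alpha>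
    using t FieldI2[OF that] min_support(2) unfolding S_def op_threads_def by blast
  have S_sub: "\<And>\<alpha>. (\<alpha>\<^sub>0, \<alpha>) \<in> r \<Longrightarrow> S \<alpha> \<subseteq> X \<alpha>"
    using supp unfolding supported_def by blast
  obtain m where "m \<in> S \<alpha>\<^sub>0 \<rightarrow> L" "\<And>s. s \<in> S \<alpha>\<^sub>0 \<Longrightarrow> \<pi> \<alpha>\<^sub>0 (m s) = s"
    "\<And>s \<alpha>. s \<in> S \<alpha>\<^sub>0 \<Longrightarrow> (\<alpha>\<^sub>0, \<alpha>) \<in> r \<Longrightarrow> \<pi> \<alpha> (m s) \<in> S \<alpha>"
    using op_limit_lift_stable_part[OF wo diag lim \<open>\<alpha>\<^sub>0 \<in> Field r\<close> S_sub bij] by blast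
  moreover have "inj_on (R \<alpha> \<alpha>\<^sub>0) (S \<alpha>)" if "(\<alpha>\<^sub>0, \<alpha>) \<in> r" for \<alpha>
    using bij[OF refl0 that] unfolding bij_betw_def by blast
  ultimately obtain y where "y \<in> Fo L" "\<And>\<alpha>. (\<alpha>\<^sub>0, \<alpha>) \<in> r \<Longrightarrow> Fm L (X \<alpha>) (\<pi> \<alpha>) y = t \<alpha>"
    using comparison_preimage_from_lifted_support[OF diag cone t refl0 supp] by blast
  moreover from this have "t = (\<lambda>\<alpha>\<in>Field r. Fm L (X \<alpha>) (\<pi> \<alpha>) y)"
    by (intro comparison_eq_thread_from[OF wo diag cone _ t \<open>\<alpha>\<^sub>0 \<in> Field r\<close>])
  ultimately show ?thesis
    by blast
qed

end

theorem mainTheorem1: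
  fixes Fo :: "'a set \<Rightarrow> 'b set"
    and Fm :: "'a set \<Rightarrow> 'a set \<Rightarrow> ('a \<Rightarrow> 'a) \<Rightarrow> 'b \<Rightarrow> 'b"
    and r :: "'k rel"
    and X :: "'k \<Rightarrow> 'a set"
    and R :: "'k \<Rightarrow> 'k \<Rightarrow> 'a \<Rightarrow> 'a"
    and L :: "'a set"
    and \<pi> :: "'k \<Rightarrow> 'a \<Rightarrow> 'a"
  assumes "set_functor Fo Fm"
    and "finitary Fo Fm"
    and "preserves_mono_pullbacks Fo Fm"
    and "uncountable_regular_ordinal r"
    and "op_diagram r X R"
    and "is_op_limit r X R L \<pi>"
  shows "bij_betw (\<lambda>y. \<lambda>\<alpha>\<in>Field r. Fm L (X \<alpha>) (\<pi> \<alpha>) y) (Fo L)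
           (op_threads r (\<lambda>\<alpha>. Fo (X \<alpha>)) (\<lambda>\<alpha> \<beta>. Fm (X \<alpha>) (X \<beta>) (R \<alpha> \<beta>)))"
proof -
  interpret finitary_pullback_setfunctor Fo Fm
    using assms(1-3) by unfold_locales
  have cone: "op_cone r X R L \<pi>"
    using assms(6) unfolding is_op_limit_def by blast
  have directed: "\<exists>b\<in>Field r. \<forall>g\<in>G. (g, b) \<in> r" if "finite G" "G \<subseteq> Field r" for G
    using uncountable_regular_ordinal_countable_bound[OF assms(4) countable_finite[OF that(1)] that(2)] .
  show ?thesis
    unfolding bij_betw_def
  proof
    show "inj_on (\<lambda>y. \<lambda>\<alpha>\<in>Field r. Fm L (X \<alpha>) (\<pi> \<alpha>) y) (Fo L)"
      using comparison_inj[OF assms(6) directed] .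
    show "(\<lambda>y. \<lambda>\<alpha>\<in>Field r. Fm L (X \<alpha>) (\<pi> \<alpha>) y) ` Fo L =
        op_threads r (\<lambda>\<alpha>. Fo (X \<alpha>)) (\<lambda>\<alpha> \<beta>. Fm (X \<alpha>) (X \<beta>) (R \<alpha> \<beta>))"
      using comparison_in_op_threads[OF assms(5) cone] comparison_surj[OF assms(4-6)]
      by (intro equalityI image_subsetI subsetI) simp_all
  qed
qed

end
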